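(* Let $0\le x<1$, $0<\beta<1$ and $\frac{(1+\beta)^2x}{4\beta}>1$. Then $$\lim_{t\to\infty}\frac{\beta}{(1+\beta)\sqrt{1-x}}\left({}_2F_1\!\left(\begin{matrix}1,(1+\beta)t\\ t+1\end{matrix};\tfrac12-\tfrac12\sqrt{1-x}\right)-{}_2F_1\!\left(\begin{matrix}1,(1+\beta)t\\ t+1\end{matrix};\tfrac12+\tfrac12\sqrt{1-x}\right)\right)=-\frac{1}{\frac{(1+\beta)^2}{4\beta}x-1},$$ uniformly on compact subsets of this region.
   Context: ${}_2F_1\!\left(\begin{matrix}a,b\\ d\end{matrix};x\right)=\sum_{n\ge0}\frac{(a)_n(b)_n}{(d)_n}\frac{x^n}{n!}$ for $|x|<1$, with $(q)_0=1$, $(q)_n=q(q+1)\cdots(q+n-1)$; $t>0$ is a real parameter tending to $\infty$. *)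

theory Defs
  imports "HOL-Analysis.Analysis"
begin

definition hyp2F1 :: "real \<Rightarrow> real \<Rightarrow> real \<Rightarrow> real \<Rightarrow> real" where
  "hyp2F1 a b d x =
     (\<Sum>n. pochhammer a n * pochhammer b n / pochhammer d n * x ^ n / fact n)"

end

theory Submission
  imports Defs
begin

(* Since (1)_n = n!, the series 2F1(1, b t; t + 1; z) has the coefficients
   c_n = prod_{k<n} (b t + k)/(t + 1 + k), and for b = 1 + beta >= 1 Weierstrass' product
   inequality gives 0 <= c_n <= b^n and b^n - c_n <= b^n n (n + 1)/(2 t).  Summed against z^n,
   this puts 2F1(1, b t; t + 1; z) within q/((1 - q)^3 t) of the geometric series 1/(1 - b z)
   whenever 0 <= b z <= q < 1.  In the region both arguments z = 1/2 -+ 1/2 sqrt (1 - x)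
   satisfy b z < 1, because (1 - b z_-)(1 - b z_+) = 1 - b + b^2 x/4 > 0, and the limit is the
   elementary value beta/(b sqrt (1 - x)) (1/(1 - b z_-) - 1/(1 - b z_+)).  On a compact K,
   b z_+ <= q < 1 and x <= xm < 1 hold uniformly, so the error is O(1/t) uniformly on K. *)

lemma hyp2F1_one_left:
  "hyp2F1 1 a d z = (\<Sum>n. pochhammer a n / pochhammer d n * z ^ n)"
  unfolding hyp2F1_def pochhammer_fact [symmetric] by simp

lemma pochhammer_quotient_eq_prod:
  fixes a d :: "'a :: field"
  shows "pochhammer a n / pochhammer d n = (\<Prod>k<n. (a + of_nat k) / (d + of_nat k))"
  by (simp add: pochhammer_prod prod_dividef atLeast0LessThan)

lemma pochhammer_quotient_bounds:
  fixes b t :: real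
  assumes "t > 0" "b \<ge> 1"
  shows "0 \<le> pochhammer (b * t) n / pochhammer (t + 1) n"
    and "pochhammer (b * t) n / pochhammer (t + 1) n \<le> b ^ n"
    and "b ^ n - pochhammer (b * t) n / pochhammer (t + 1) n
      \<le> b ^ n * (real n * (real n + 1) / (2 * t))"
proof -
  define \<rho> where "\<rho> k = (b * t + k) / (b * (t + 1 + k))" for k :: nat
  have "(b * t + k) / (t + 1 + k) = b * \<rho> k" for k
    using assms by (simp add: \<rho>_def)
  then have quotient: "pochhammer (b * t) n / pochhammer (t + 1) n = b ^ n * (\<Prod>k<n. \<rho> k)"
    by (simp add: pochhammer_quotient_eq_prod prod.distrib)
  have \<rho>_unit: "\<rho> k \<in> {0..1}" for k
  proof -
    have "b * t + k \<le> b * (t + 1 + k)"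
      using assms mult_right_mono [of 1 b "real k"] by (simp add: algebra_simps)
    then show ?thesis
      using assms by (simp add: \<rho>_def divide_le_eq_1)
  qed
  have \<rho>_close: "1 - \<rho> k \<le> real (Suc k) / t" for k
  proof -
    have "b * (t + 1 + k) > 0"
      using assms by simp
    then have "1 - \<rho> k = (b + (b - 1) * k) / (b * (t + 1 + k))"
      by (simp add: \<rho>_def field_simps)
    also have "\<dots> \<le> b * (1 + k) / (b * t)"
      using assms by (intro frac_le mult_left_mono) (auto simp: algebra_simps)
    finally show ?thesis
      using assms by simp
  qed
  have "0 \<le> (\<Prod>k<n. \<rho> k)" "(\<Prod>k<n. \<rho> k) \<le> 1"
    using \<rho>_unit by (auto intro: prod_nonneg prod_le_1)
  then show "0 \<le> pochhammer (b * t) n / pochhammer (t + 1) n"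
    and "pochhammer (b * t) n / pochhammer (t + 1) n \<le> b ^ n"
    using assms unfolding quotient by (auto intro: mult_left_le)
  have "1 - (\<Prod>k<n. \<rho> k) \<le> (\<Sum>k<n. 1 - \<rho> k)"
    using Weierstrass_prod_ineq [of "{..<n}" "\<lambda>k. 1 - \<rho> k"] \<rho>_unit by simp
  also have "\<dots> \<le> (\<Sum>k<n. real (Suc k) / t)"
    by (intro sum_mono \<rho>_close)
  also have "\<dots> = real n * (real n + 1) / (2 * t)"
    using assms by (induction n) (simp_all add: field_simps)
  finally have "b ^ n * (1 - (\<Prod>k<n. \<rho> k)) \<le> b ^ n * (real n * (real n + 1) / (2 * t))"
    using assms by (intro mult_left_mono) auto
  then show "b ^ n - pochhammer (b * t) n / pochhammer (t + 1) n
      \<le> b ^ n * (real n * (real n + 1) / (2 * t))"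
    unfolding quotient by (simp add: right_diff_distrib)
qed

lemma pochhammer_3_eq_fact: "pochhammer (3::real) n = fact (n + 2) / 2"
  by (induction n) (simp_all add: pochhammer_Suc field_simps)

lemma sums_triangular_power:
  fixes q :: real
  assumes "\<bar>q\<bar> < 1"
  shows "(\<lambda>n. real n * (real n + 1) / 2 * q ^ n) sums (q / (1 - q) ^ 3)"
proof -
  have "(\<lambda>n. ((- 3) gchoose n) * (- q) ^ n) sums (1 + - q) powr (- 3)"
    using assms by (intro gen_binomial_real) simp
  moreover have "((- 3) gchoose n) * (- q) ^ n = (real n + 1) * (real n + 2) / 2 * q ^ n" for n
  proof -
    have "fact (n + 2) = (real n + 1) * (real n + 2) * (fact n :: real)"
      by (simp add: algebra_simps)
    then show ?thesis
      by (simp add: gbinomial_pochhammer pochhammer_3_eq_fact power_minus' field_simps)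
  qed
  moreover have "(1 + - q) powr (- 3) = 1 / (1 - q) ^ 3"
    using assms by (simp add: powr_minus powr_realpow divide_inverse)
  ultimately have "(\<lambda>n. (real n + 1) * (real n + 2) / 2 * q ^ n) sums (1 / (1 - q) ^ 3)"
    by simp
  then have "(\<lambda>n. q * ((real n + 1) * (real n + 2) / 2 * q ^ n)) sums (q / (1 - q) ^ 3)"
    using sums_mult by fastforce
  then have "(\<lambda>n. real (Suc n) * (real (Suc n) + 1) / 2 * q ^ Suc n) sums (q / (1 - q) ^ 3)"
    by (simp add: algebra_simps)
  then show ?thesis
    using sums_Suc_iff [where f = "\<lambda>n. real n * (real n + 1) / 2 * q ^ n"] by simp
qed

lemma hyp2F1_one_geometric_approx:
  fixes b t z q :: real
  assumes "t > 0" "b \<ge> 1" "z \<ge> 0" "b * z \<le> q" "q < 1"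
  shows "\<bar>hyp2F1 1 (b * t) (t + 1) z - 1 / (1 - b * z)\<bar> \<le> q / ((1 - q) ^ 3 * t)"
proof -
  define c where "c n = pochhammer (b * t) n / pochhammer (t + 1) n" for n
  define w where "w = b * z"
  have w: "0 \<le> w" "w \<le> q"
    using assms by (simp_all add: w_def)
  have geometric: "(\<lambda>n. w ^ n) sums (1 / (1 - w))"
    using geometric_sums [of w] w \<open>q < 1\<close> by (simp add: divide_inverse)
  have term_bounds: "0 \<le> c n * z ^ n" "c n * z ^ n \<le> w ^ n"
    and error_bound: "w ^ n - c n * z ^ n \<le> real n * (real n + 1) / 2 * q ^ n / t" for n
  proof -
    note coeff = pochhammer_quotient_bounds [OF \<open>t > 0\<close> \<open>b \<ge> 1\<close>, of n, folded c_def]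
    show "0 \<le> c n * z ^ n" "c n * z ^ n \<le> w ^ n"
      using coeff \<open>z \<ge> 0\<close> by (auto simp: w_def power_mult_distrib intro: mult_right_mono)
    have "w ^ n - c n * z ^ n = (b ^ n - c n) * z ^ n"
      by (simp add: w_def power_mult_distrib algebra_simps)
    also have "\<dots> \<le> b ^ n * (real n * (real n + 1) / (2 * t)) * z ^ n"
      using coeff \<open>z \<ge> 0\<close> by (intro mult_right_mono) auto
    also have "\<dots> = real n * (real n + 1) / 2 * w ^ n / t"
      by (simp add: w_def power_mult_distrib)
    also have "\<dots> \<le> real n * (real n + 1) / 2 * q ^ n / t"
      using w \<open>t > 0\<close> by (intro divide_right_mono mult_left_mono power_mono) auto
    finally show "w ^ n - c n * z ^ n \<le> real n * (real n + 1) / 2 * q ^ n / t" .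
  qed
  have "summable (\<lambda>n. c n * z ^ n)"
    by (rule summable_comparison_test' [OF sums_summable [OF geometric], of 0])
      (use term_bounds in simp)
  then have difference:
    "(\<lambda>n. w ^ n - c n * z ^ n) sums (1 / (1 - w) - hyp2F1 1 (b * t) (t + 1) z)"
    using geometric by (simp add: hyp2F1_one_left c_def sums_diff summable_sums)
  have errors: "(\<lambda>n. real n * (real n + 1) / 2 * q ^ n / t) sums (q / ((1 - q) ^ 3 * t))"
    using sums_divide [OF sums_triangular_power, of q t] w \<open>q < 1\<close> by simp
  have "0 \<le> 1 / (1 - w) - hyp2F1 1 (b * t) (t + 1) z"
    by (rule sums_le [OF _ sums_zero difference]) (use term_bounds in simp)
  moreover have "1 / (1 - w) - hyp2F1 1 (b * t) (t + 1) z \<le> q / ((1 - q) ^ 3 * t)"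
    by (rule sums_le [OF _ difference errors]) (rule error_bound)
  ultimately show ?thesis
    by (simp add: w_def)
qed

lemma one_minus_scaled_arguments_mult:
  fixes b x :: real
  assumes "x \<le> 1"
  shows "(1 - b * (1/2 - 1/2 * sqrt (1 - x))) * (1 - b * (1/2 + 1/2 * sqrt (1 - x)))
    = 1 - b + b^2 * x / 4"
proof -
  define s where "s = sqrt (1 - x)"
  have "(1 - b * (1/2 - 1/2 * s)) * (1 - b * (1/2 + 1/2 * s)) = 1 - b + b^2 * (1 - s^2) / 4"
    by (simp add: field_simps power2_eq_square)
  moreover have "1 - s^2 = x"
    using assms by (simp add: s_def)
  ultimately show ?thesis
    unfolding s_def [symmetric] by (simp only:)
qed

lemma scaled_upper_argument_less_1:
  fixes x \<beta> :: real
  assumes "x < 1" "0 < \<beta>" "\<beta> < 1" "(1 + \<beta>)^2 * x / (4 * \<beta>) > 1"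
  shows "(1 + \<beta>) * (1/2 + 1/2 * sqrt (1 - x)) < 1"
proof -
  define u where "u = 1 - (1 + \<beta>) * (1/2 - 1/2 * sqrt (1 - x))"
  define v where "v = 1 - (1 + \<beta>) * (1/2 + 1/2 * sqrt (1 - x))"
  have "u * v > 0"
    using one_minus_scaled_arguments_mult [of x "1 + \<beta>"] assms
    by (simp add: u_def v_def field_simps)
  moreover have "u + v > 0"
    using assms by (simp add: u_def v_def algebra_simps)
  ultimately have "v > 0"
    by (smt (verit) mult_nonneg_nonpos)
  then show ?thesis
    by (simp add: v_def)
qed

lemma scaled_geometric_difference_eq:
  fixes x \<beta> :: real
  assumes "x < 1" "0 < \<beta>" "(1 + \<beta>)^2 * x / (4 * \<beta>) > 1"
  shows "\<beta> / ((1 + \<beta>) * sqrt (1 - x)) *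
      (1 / (1 - (1 + \<beta>) * (1/2 - 1/2 * sqrt (1 - x)))
       - 1 / (1 - (1 + \<beta>) * (1/2 + 1/2 * sqrt (1 - x))))
    = - 1 / ((1 + \<beta>)^2 / (4 * \<beta>) * x - 1)"
proof -
  define s where "s = sqrt (1 - x)"
  define u where "u = 1 - (1 + \<beta>) * (1/2 - 1/2 * s)"
  define v where "v = 1 - (1 + \<beta>) * (1/2 + 1/2 * s)"
  have uv: "u * v = \<beta> * ((1 + \<beta>)^2 / (4 * \<beta>) * x - 1)"
    using one_minus_scaled_arguments_mult [of x "1 + \<beta>"] assms
    by (simp add: u_def v_def s_def field_simps)
  moreover have "(1 + \<beta>)^2 / (4 * \<beta>) * x - 1 > 0"
    using assms by simp
  ultimately have "u \<noteq> 0" "v \<noteq> 0"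
    using assms by auto
  moreover have "v - u = - ((1 + \<beta>) * s)"
    by (simp add: u_def v_def algebra_simps)
  moreover have "s > 0"
    using assms by (simp add: s_def)
  ultimately have "\<beta> / ((1 + \<beta>) * s) * (1 / u - 1 / v) = - \<beta> / (u * v)"
    using assms by (simp add: diff_frac_eq)
  then show ?thesis
    using assms unfolding uv by (simp add: s_def u_def v_def)
qed

lemma scaled_hyp2F1_difference_dist_le:
  fixes x \<beta> t q xm :: real
  assumes "0 \<le> x" "x \<le> xm" "xm < 1" "0 < \<beta>" "(1 + \<beta>)^2 * x / (4 * \<beta>) > 1" "t > 0"
    and "(1 + \<beta>) * (1/2 + 1/2 * sqrt (1 - x)) \<le> q" "q < 1"
  shows "dist (\<beta> / ((1 + \<beta>) * sqrt (1 - x)) *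
      (hyp2F1 1 ((1 + \<beta>) * t) (t + 1) (1/2 - 1/2 * sqrt (1 - x))
       - hyp2F1 1 ((1 + \<beta>) * t) (t + 1) (1/2 + 1/2 * sqrt (1 - x))))
    (- 1 / ((1 + \<beta>)^2 / (4 * \<beta>) * x - 1)) \<le> 2 * q / ((1 - q) ^ 3 * sqrt (1 - xm)) / t"
proof -
  define s where "s = sqrt (1 - x)"
  define zm where "zm = 1/2 - 1/2 * s"
  define zp where "zp = 1/2 + 1/2 * s"
  define A where "A = \<beta> / ((1 + \<beta>) * s)"
  define E where "E = q / ((1 - q) ^ 3 * t)"
  define F where "F z = hyp2F1 1 ((1 + \<beta>) * t) (t + 1) z" for z
  define G where "G z = 1 / (1 - (1 + \<beta>) * z)" for z
  have s: "0 < s" "s \<le> 1"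
    using assms by (simp_all add: s_def)
  have approx: "\<bar>F z - G z\<bar> \<le> E" if "0 \<le> z" "(1 + \<beta>) * z \<le> q" for z
    unfolding F_def G_def E_def using assms that by (intro hyp2F1_one_geometric_approx) auto
  have "(1 + \<beta>) * zm \<le> (1 + \<beta>) * zp"
    using assms s by (intro mult_left_mono) (auto simp: zm_def zp_def)
  moreover have "(1 + \<beta>) * zp \<le> q"
    using assms by (simp add: zp_def s_def)
  moreover have "0 \<le> zm" "0 \<le> zp"
    using s by (simp_all add: zm_def zp_def)
  ultimately have errors: "\<bar>F zm - G zm\<bar> \<le> E" "\<bar>F zp - G zp\<bar> \<le> E"
    by (simp_all add: approx)
  have "0 \<le> A"
    using assms s by (simp add: A_def)
  have "A = \<beta> / (1 + \<beta>) * (1 / s)"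
    by (simp add: A_def)
  also have "\<dots> \<le> 1 * (1 / s)"
    using assms s by (intro mult_right_mono) auto
  also have "\<dots> \<le> 1 / sqrt (1 - xm)"
    using assms s by (auto simp: s_def intro!: divide_left_mono)
  finally have "A \<le> 1 / sqrt (1 - xm)" .
  have "A * (F zm - F zp) - A * (G zm - G zp) = A * ((F zm - G zm) - (F zp - G zp))"
    by (simp add: algebra_simps)
  then have "\<bar>A * (F zm - F zp) - A * (G zm - G zp)\<bar> = A * \<bar>(F zm - G zm) - (F zp - G zp)\<bar>"
    using \<open>0 \<le> A\<close> by (simp add: abs_mult)
  also have "\<dots> \<le> 1 / sqrt (1 - xm) * (2 * E)"
    using assms errors \<open>0 \<le> A\<close> \<open>A \<le> 1 / sqrt (1 - xm)\<close>
      abs_triangle_ineq4 [of "F zm - G zm" "F zp - G zp"]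
    by (intro mult_mono) auto
  also have "\<dots> = 2 * q / ((1 - q) ^ 3 * sqrt (1 - xm)) / t"
    by (simp add: E_def)
  finally have bound: "\<bar>A * (F zm - F zp) - A * (G zm - G zp)\<bar>
      \<le> 2 * q / ((1 - q) ^ 3 * sqrt (1 - xm)) / t" .
  have limit: "A * (G zm - G zp) = - 1 / ((1 + \<beta>)^2 / (4 * \<beta>) * x - 1)"
    using scaled_geometric_difference_eq [of x \<beta>] assms by (simp add: A_def G_def s_def zm_def zp_def)
  from bound [unfolded limit] show ?thesis
    unfolding dist_real_def A_def F_def zm_def zp_def s_def .
qed

lemma compact_continuous_less_bound:
  fixes f :: "'a::topological_space \<Rightarrow> real"
  assumes "compact K" "continuous_on K f" "\<And>p. p \<in> K \<Longrightarrow> f p < c"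
  shows "\<exists>d<c. \<forall>p\<in>K. f p \<le> d"
proof (cases "K = {}")
  case True
  then show ?thesis
    using lt_ex [of c] by auto
next
  case False
  then obtain p0 where "p0 \<in> K" "\<forall>p\<in>K. f p \<le> f p0"
    using continuous_attains_sup [OF assms(1) _ assms(2)] by blast
  then show ?thesis
    using assms(3) by blast
qed

lemma uniform_limit_at_top_if_dist_le:
  fixes f :: "real \<Rightarrow> 'a \<Rightarrow> 'b::metric_space"
  assumes "\<And>t p. t > 0 \<Longrightarrow> p \<in> K \<Longrightarrow> dist (f t p) (g p) \<le> C / t"
  shows "uniform_limit K f g at_top"
proof (rule uniform_limitI)
  fix e :: real
  assume "e > 0"
  have "\<forall>\<^sub>F t in at_top. t > 0 \<and> t > \<bar>C\<bar> / e"
    by (intro eventually_conj eventually_gt_at_top)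
  then show "\<forall>\<^sub>F t in at_top. \<forall>p\<in>K. dist (f t p) (g p) < e"
  proof eventually_elim
    case (elim t)
    then have "t > 0" "\<bar>C\<bar> < e * t"
      using \<open>e > 0\<close> by (auto simp: field_simps)
    then have "C / t < e"
      using abs_ge_self [of C] by (simp add: divide_less_eq)
    then show ?case
      using assms \<open>t > 0\<close> by (meson le_less_trans)
  qed
qed

theorem corollary2:
  fixes K :: "(real \<times> real) set"
  assumes "compact K"
    and "K \<subseteq> {(x, \<beta>). 0 \<le> x \<and> x < 1 \<and> 0 < \<beta> \<and> \<beta> < 1 \<and>
                         (1 + \<beta>)^2 * x / (4 * \<beta>) > 1}"
  shows "uniform_limit K
    (\<lambda>t (x, \<beta>). \<beta> / ((1 + \<beta>) * sqrt (1 - x)) *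
       (hyp2F1 1 ((1 + \<beta>) * t) (t + 1) (1/2 - 1/2 * sqrt (1 - x))
        - hyp2F1 1 ((1 + \<beta>) * t) (t + 1) (1/2 + 1/2 * sqrt (1 - x))))
    (\<lambda>(x, \<beta>). - 1 / ((1 + \<beta>)^2 / (4 * \<beta>) * x - 1))
    (at_top :: real filter)"
proof -
  have region: "0 \<le> fst p \<and> fst p < 1 \<and> 0 < snd p \<and> snd p < 1 \<and>
      (1 + snd p)^2 * fst p / (4 * snd p) > 1" if "p \<in> K" for p
    using assms(2) that by auto
  have upper_continuous: "continuous_on K (\<lambda>p. (1 + snd p) * (1/2 + 1/2 * sqrt (1 - fst p)))"
    by (intro continuous_intros)
  have upper_less_1: "(1 + snd p) * (1/2 + 1/2 * sqrt (1 - fst p)) < 1" if "p \<in> K" for p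
    using region [OF that] by (intro scaled_upper_argument_less_1) auto
  obtain q where "q < 1"
    and q: "\<forall>p\<in>K. (1 + snd p) * (1/2 + 1/2 * sqrt (1 - fst p)) \<le> q"
    using compact_continuous_less_bound [OF assms(1) upper_continuous upper_less_1] by blast
  obtain xm where "xm < 1" and xm: "\<forall>p\<in>K. fst p \<le> xm"
    using compact_continuous_less_bound [OF assms(1) continuous_on_fst [OF continuous_on_id]] region
    by blast
  show ?thesis
    by (rule uniform_limit_at_top_if_dist_le [where C = "2 * q / ((1 - q) ^ 3 * sqrt (1 - xm))"],
        clarify, rule scaled_hyp2F1_difference_dist_le)
      (use region q xm \<open>q < 1\<close> \<open>xm < 1\<close> in force)+
qed

end
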